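(* For all $\alpha,\beta\ge1$, \[ \Phi(\alpha,\beta)=\max\bigl\{R(AB):\ A,B \text{ are } 2\times 2 \text{ matrices with strictly positive entries},\ R(A)\le\alpha,\ R(B)\le\beta\bigr\}, \] and in particular the maximum is attained.
   Context: For a $2\times2$ matrix $A=(a_{ij})$ with strictly positive entries, $F(A)=\frac{a_{11}a_{22}}{a_{12}a_{21}}$ and the distortion is $R(A)=\max\{F(A),1/F(A)\}$. The envelope function is $\Phi(\alpha,\beta)=\left(\frac{1+\sqrt{\alpha\beta}}{\sqrt{\alpha}+\sqrt{\beta}}\right)^2$. *)

theory Defs
  imports "HOL-Analysis.Analysis"
begin

text \<open>2x2 real matrices are represented as real^2^2, rows/columns indexed by 1 and 2
  (so A $ 1 $ 2 is the entry a_12); matrix product is (**).\<close>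

definition pos_mat :: "real^2^2 \<Rightarrow> bool" where
  "pos_mat A \<longleftrightarrow> (\<forall>i j. A $ i $ j > 0)"

definition Fcr :: "real^2^2 \<Rightarrow> real" where
  "Fcr A = (A $ 1 $ 1 * A $ 2 $ 2) / (A $ 1 $ 2 * A $ 2 $ 1)"

definition Rdist :: "real^2^2 \<Rightarrow> real" where
  "Rdist A = max (Fcr A) (1 / Fcr A)"

definition Phi :: "real \<Rightarrow> real \<Rightarrow> real" where
  "Phi \<alpha> \<beta> = ((1 + sqrt (\<alpha> * \<beta>)) / (sqrt \<alpha> + sqrt \<beta>))^2"

end

theory Submission
  imports Defs
begin

text \<open>Write t = a11 b11 / (a12 b21), a = F(A) and b = F(B). Then F(AB) is the rational
  function (t + 1)(t + ab) / ((t + a)(t + b)) of (t, a, b), and 1/F(AB) is the same function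
  at (t/a, 1/a, b); so it suffices to bound this function by Phi(alpha, beta) when
  1/alpha <= a <= alpha and 1/beta <= b <= beta. Its defect from Phi(a, b) is
  (a - 1)(b - 1)(t - sqrt(ab))^2 divided by a positive quantity. If a and b lie on the same
  side of 1 this gives F(AB) <= Phi(a, b) <= Phi(alpha, beta), because Phi(1/a, 1/b) = Phi(a, b)
  and Phi is increasing in each argument on [1, oo); otherwise F(AB) <= 1 <= Phi(alpha, beta).
  The square vanishes for t = sqrt(alpha beta), a = alpha, b = beta, which realises the bound.\<close>

definition Fcr_product :: "real \<Rightarrow> real \<Rightarrow> real \<Rightarrow> real" where
  "Fcr_product t a b = (t + 1) * (t + a * b) / ((t + a) * (t + b))"

lemma Fcr_product_entries:
  fixes x11 x12 x21 x22 y11 y12 y21 y22 :: real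
  assumes "x11 > 0" "x12 > 0" "x21 > 0" "x22 > 0" "y11 > 0" "y12 > 0" "y21 > 0" "y22 > 0"
  shows "Fcr_product (x11 * y11 / (x12 * y21)) (x11 * x22 / (x12 * x21))
           (y11 * y22 / (y12 * y21))
         = (x11 * y11 + x12 * y21) * (x21 * y12 + x22 * y22)
           / ((x11 * y12 + x12 * y22) * (x21 * y11 + x22 * y21))"
    (is "Fcr_product ?t ?a ?b = ?S1 * ?S2 / (?S3 * ?S4)")
proof -
  have "?t + 1 = ?S1 / (x12 * y21)"
    and "?t + ?a * ?b = x11 * y11 * ?S2 / (x12 * x21 * y12 * y21)"
    and "?t + ?a = x11 * ?S4 / (x12 * x21 * y21)"
    and "?t + ?b = y11 * ?S3 / (x12 * y12 * y21)"
    using assms by (simp_all add: field_simps)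
  moreover have "?S3 > 0" "?S4 > 0"
    using assms by (simp_all add: add_pos_pos)
  ultimately show ?thesis
    using assms by (simp add: Fcr_product_def divide_simps)
qed

lemma Fcr_pos: "pos_mat A \<Longrightarrow> Fcr A > 0"
  by (simp add: pos_mat_def Fcr_def)

lemma Fcr_matrix_mult:
  assumes "pos_mat A" "pos_mat B"
  shows "Fcr (A ** B) = Fcr_product (A$1$1 * B$1$1 / (A$1$2 * B$2$1)) (Fcr A) (Fcr B)"
  using assms
    Fcr_product_entries[of "A$1$1" "A$1$2" "A$2$1" "A$2$2" "B$1$1" "B$1$2" "B$2$1" "B$2$2"]
  by (simp add: pos_mat_def Fcr_def matrix_matrix_mult_def sum_2)

lemma inverse_Fcr_product:
  assumes "t > 0" "a > 0" "b > 0"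
  shows "1 / Fcr_product t a b = Fcr_product (t / a) (1 / a) b"
  using assms by (simp add: Fcr_product_def divide_simps) (simp add: algebra_simps)

definition Phi_root :: "real \<Rightarrow> real \<Rightarrow> real" where
  "Phi_root p q = (1 + p * q) / (p + q)"

lemma Phi_eq_Phi_root_sqrt:
  assumes "\<alpha> \<ge> 0" "\<beta> \<ge> 0"
  shows "Phi \<alpha> \<beta> = (Phi_root (sqrt \<alpha>) (sqrt \<beta>))\<^sup>2"
  using assms by (simp add: Phi_def Phi_root_def real_sqrt_mult)

lemma Phi_root_commute: "Phi_root p q = Phi_root q p"
  by (simp add: Phi_root_def ac_simps)

lemma Phi_root_inverse:
  assumes "u > 0" "v > 0"
  shows "Phi_root (1 / u) (1 / v) = Phi_root u v"
  using assms by (simp add: Phi_root_def divide_simps) (simp add: algebra_simps)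

lemma one_le_Phi_root:
  assumes "p \<ge> 1" "q \<ge> 1"
  shows "1 \<le> Phi_root p q"
proof -
  have "0 \<le> (p - 1) * (q - 1)"
    using assms by simp
  then have "p + q \<le> 1 + p * q"
    by (simp add: algebra_simps)
  then show ?thesis
    using assms by (simp add: Phi_root_def)
qed

lemma Phi_root_mono_left:
  assumes "0 < u" "u \<le> p" "v \<ge> 1"
  shows "Phi_root u v \<le> Phi_root p v"
proof -
  have "(1 + u * v) * (p + v) - (1 + p * v) * (u + v) = (p - u) * (1 - v\<^sup>2)"
    by (simp add: algebra_simps power2_eq_square)
  also have "\<dots> \<le> 0"
    using assms by (intro mult_nonneg_nonpos) (auto simp: one_le_power)
  finally show ?thesis
    using assms by (simp add: Phi_root_def divide_simps)
qed

lemma Phi_root_mono: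
  assumes "1 \<le> u" "u \<le> p" "1 \<le> v" "v \<le> q"
  shows "Phi_root u v \<le> Phi_root p q"
proof -
  have "Phi_root u v \<le> Phi_root p v"
    using assms by (intro Phi_root_mono_left) auto
  also have "\<dots> \<le> Phi_root p q"
    using Phi_root_mono_left[of v q p] assms by (simp add: Phi_root_commute)
  finally show ?thesis .
qed

lemma one_le_Phi:
  assumes "\<alpha> \<ge> 1" "\<beta> \<ge> 1"
  shows "1 \<le> Phi \<alpha> \<beta>"
  using one_le_Phi_root[of "sqrt \<alpha>" "sqrt \<beta>"] assms
  by (simp add: Phi_eq_Phi_root_sqrt one_le_power)

lemma Phi_mono:
  assumes "1 \<le> a" "a \<le> \<alpha>" "1 \<le> b" "b \<le> \<beta>"
  shows "Phi a b \<le> Phi \<alpha> \<beta>"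
proof -
  have "Phi_root (sqrt a) (sqrt b) \<le> Phi_root (sqrt \<alpha>) (sqrt \<beta>)"
    using assms by (intro Phi_root_mono) auto
  moreover have "0 \<le> Phi_root (sqrt a) (sqrt b)"
    using assms by (simp add: Phi_root_def)
  ultimately show ?thesis
    using assms by (simp add: Phi_eq_Phi_root_sqrt power_mono)
qed

lemma Phi_inverse:
  assumes "a > 0" "b > 0"
  shows "Phi (1 / a) (1 / b) = Phi a b"
  using Phi_root_inverse[of "sqrt a" "sqrt b"] assms
  by (simp add: Phi_eq_Phi_root_sqrt real_sqrt_divide)

lemma Phi_sub_Fcr_product:
  assumes "t > 0" "a > 0" "b > 0"
  shows "Phi a b - Fcr_product t a b
           = (a - 1) * (b - 1) * (t - sqrt (a * b))\<^sup>2
             / ((sqrt a + sqrt b)\<^sup>2 * (t + a) * (t + b))"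
proof -
  obtain u v where uv: "u > 0" "v > 0" "a = u\<^sup>2" "b = v\<^sup>2"
    using assms by (metis real_sqrt_gt_0_iff real_sqrt_pow2 less_imp_le)
  have "u + v > 0" "t + u * u > 0" "t + v * v > 0"
    using uv assms by (simp_all add: add_pos_pos)
  then show ?thesis
    using uv
    by (simp add: Phi_def Fcr_product_def real_sqrt_mult power2_eq_square divide_simps)
       (simp add: algebra_simps)
qed

lemma Fcr_product_sqrt_eq_Phi:
  assumes "a > 0" "b > 0"
  shows "Fcr_product (sqrt (a * b)) a b = Phi a b"
  using Phi_sub_Fcr_product[of "sqrt (a * b)" a b] assms by simp

lemma Fcr_product_le_Phi:
  assumes "t > 0" "a > 0" "b > 0" "(a - 1) * (b - 1) \<ge> 0"
  shows "Fcr_product t a b \<le> Phi a b"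
proof -
  have "0 \<le> (a - 1) * (b - 1) * (t - sqrt (a * b))\<^sup>2
             / ((sqrt a + sqrt b)\<^sup>2 * (t + a) * (t + b))"
    using assms by simp
  then show ?thesis
    using Phi_sub_Fcr_product[OF assms(1-3)] by simp
qed

lemma Fcr_product_le_one:
  assumes "t > 0" "a > 0" "b > 0" "(a - 1) * (b - 1) \<le> 0"
  shows "Fcr_product t a b \<le> 1"
proof -
  have "Fcr_product t a b - 1 = t * ((a - 1) * (b - 1)) / ((t + a) * (t + b))"
    using assms by (simp add: Fcr_product_def divide_simps) (simp add: algebra_simps)
  also have "\<dots> \<le> 0"
    using assms by (simp add: divide_nonpos_nonneg mult_nonneg_nonpos)
  finally show ?thesis
    by simp
qed

lemma Fcr_product_le_Phi_bound:
  assumes "t > 0" "\<alpha> \<ge> 1" "\<beta> \<ge> 1"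
    and "1 / \<alpha> \<le> a" "a \<le> \<alpha>" "1 / \<beta> \<le> b" "b \<le> \<beta>"
  shows "Fcr_product t a b \<le> Phi \<alpha> \<beta>"
proof -
  have "1 / \<alpha> > 0" "1 / \<beta> > 0"
    using assms by simp_all
  then have "a > 0" "b > 0"
    using assms by linarith+
  consider "a \<ge> 1" "b \<ge> 1" | "a \<le> 1" "b \<le> 1" | "(a - 1) * (b - 1) \<le> 0"
    by (metis mult_nonneg_nonpos mult_nonpos_nonneg diff_ge_0_iff_ge diff_le_0_iff_le linear)
  then show ?thesis
  proof cases
    case 1
    then have "Fcr_product t a b \<le> Phi a b"
      using \<open>a > 0\<close> \<open>b > 0\<close> assms by (intro Fcr_product_le_Phi) auto
    also have "\<dots> \<le> Phi \<alpha> \<beta>"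
      using 1 assms by (intro Phi_mono) auto
    finally show ?thesis .
  next
    case 2
    then have "Fcr_product t a b \<le> Phi a b"
      using \<open>a > 0\<close> \<open>b > 0\<close> assms
      by (intro Fcr_product_le_Phi) (auto intro: mult_nonpos_nonpos)
    also have "\<dots> = Phi (1 / a) (1 / b)"
      using \<open>a > 0\<close> \<open>b > 0\<close> by (simp add: Phi_inverse)
    also have "\<dots> \<le> Phi \<alpha> \<beta>"
      using 2 assms \<open>a > 0\<close> \<open>b > 0\<close> by (intro Phi_mono) (auto simp: field_simps)
    finally show ?thesis .
  next
    case 3
    then have "Fcr_product t a b \<le> 1"
      using \<open>a > 0\<close> \<open>b > 0\<close> assms by (intro Fcr_product_le_one) auto
    also have "\<dots> \<le> Phi \<alpha> \<beta>"
      using assms by (simp add: one_le_Phi)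
    finally show ?thesis .
  qed
qed

lemma max_inverse_le_iff:
  fixes x c :: real
  assumes "x > 0"
  shows "max x (1 / x) \<le> c \<longleftrightarrow> 1 / c \<le> x \<and> x \<le> c"
  using assms by (auto simp: field_simps)

lemma Rdist_le_iff:
  assumes "pos_mat A"
  shows "Rdist A \<le> c \<longleftrightarrow> 1 / c \<le> Fcr A \<and> Fcr A \<le> c"
  using max_inverse_le_iff[OF Fcr_pos[OF assms]] by (simp add: Rdist_def)

lemma Rdist_mult_le_Phi:
  assumes "\<alpha> \<ge> 1" "\<beta> \<ge> 1" "pos_mat A" "pos_mat B" "Rdist A \<le> \<alpha>" "Rdist B \<le> \<beta>"
  shows "Rdist (A ** B) \<le> Phi \<alpha> \<beta>"
proof -
  define t where "t = A$1$1 * B$1$1 / (A$1$2 * B$2$1)"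
  define a where "a = Fcr A"
  define b where "b = Fcr B"
  have "t > 0"
    using assms(3,4) by (simp add: t_def pos_mat_def)
  have "a > 0" "b > 0"
    using assms(3,4) by (simp_all add: a_def b_def Fcr_pos)
  have a: "1 / \<alpha> \<le> a" "a \<le> \<alpha>" and b: "1 / \<beta> \<le> b" "b \<le> \<beta>"
    using assms by (simp_all add: a_def b_def Rdist_le_iff)
  have "1 / \<alpha> \<le> 1 / a" "1 / a \<le> \<alpha>"
    using a \<open>a > 0\<close> assms(1) by (simp_all add: field_simps)
  have "Fcr_product t a b \<le> Phi \<alpha> \<beta>"
    using \<open>t > 0\<close> assms(1,2) a b by (rule Fcr_product_le_Phi_bound)
  moreover have "1 / Fcr_product t a b \<le> Phi \<alpha> \<beta>"
    unfolding inverse_Fcr_product[OF \<open>t > 0\<close> \<open>a > 0\<close> \<open>b > 0\<close>]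
    using \<open>t > 0\<close> \<open>a > 0\<close> assms(1,2) \<open>1 / \<alpha> \<le> 1 / a\<close> \<open>1 / a \<le> \<alpha>\<close> b
    by (intro Fcr_product_le_Phi_bound) simp_all
  ultimately show ?thesis
    using assms(3,4) by (simp add: Rdist_def Fcr_matrix_mult a_def b_def t_def)
qed

definition mat2 :: "real \<Rightarrow> real \<Rightarrow> real \<Rightarrow> real \<Rightarrow> real^2^2" where
  "mat2 a b c d = vector [vector [a, b], vector [c, d]]"

lemma mat2_nth [simp]:
  "mat2 a b c d $ 1 $ 1 = a" "mat2 a b c d $ 1 $ 2 = b"
  "mat2 a b c d $ 2 $ 1 = c" "mat2 a b c d $ 2 $ 2 = d"
  by (simp_all add: mat2_def vector_2)

lemma pos_mat_mat2: "pos_mat (mat2 a b c d) \<longleftrightarrow> a > 0 \<and> b > 0 \<and> c > 0 \<and> d > 0"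
  by (simp add: pos_mat_def forall_2)

lemma Fcr_mat2: "Fcr (mat2 a b c d) = a * d / (b * c)"
  by (simp add: Fcr_def)

lemma Rdist_eq_Fcr:
  assumes "Fcr A \<ge> 1"
  shows "Rdist A = Fcr A"
proof -
  have "1 / Fcr A \<le> 1"
    using assms by simp
  then show ?thesis
    unfolding Rdist_def using assms by (intro max_absorb1) linarith
qed

lemma Phi_attained:
  assumes "\<alpha> \<ge> 1" "\<beta> \<ge> 1"
  obtains A B where "pos_mat A" "pos_mat B" "Rdist A = \<alpha>" "Rdist B = \<beta>"
    "Rdist (A ** B) = Phi \<alpha> \<beta>"
proof
  define T where "T = sqrt (\<alpha> * \<beta>)"
  have "T > 0"
    using assms by (simp add: T_def)
  show A: "pos_mat (mat2 T 1 T \<alpha>)" and B: "pos_mat (mat2 1 1 1 \<beta>)"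
    using \<open>T > 0\<close> assms by (simp_all add: pos_mat_mat2)
  show "Rdist (mat2 T 1 T \<alpha>) = \<alpha>" "Rdist (mat2 1 1 1 \<beta>) = \<beta>"
    using \<open>T > 0\<close> assms by (simp_all add: Rdist_eq_Fcr Fcr_mat2)
  have "Fcr (mat2 T 1 T \<alpha> ** mat2 1 1 1 \<beta>) = Fcr_product T \<alpha> \<beta>"
    using \<open>T > 0\<close> assms by (simp add: Fcr_matrix_mult[OF A B] Fcr_mat2)
  also have "\<dots> = Phi \<alpha> \<beta>"
    using assms by (simp add: T_def Fcr_product_sqrt_eq_Phi)
  finally show "Rdist (mat2 T 1 T \<alpha> ** mat2 1 1 1 \<beta>) = Phi \<alpha> \<beta>"
    using assms by (simp add: Rdist_eq_Fcr one_le_Phi)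
qed

theorem mainTheorem4:
  fixes \<alpha> \<beta> :: real
  assumes "\<alpha> \<ge> 1" and "\<beta> \<ge> 1"
  shows "(\<forall>A B :: real^2^2. pos_mat A \<and> pos_mat B \<and> Rdist A \<le> \<alpha> \<and> Rdist B \<le> \<beta>
             \<longrightarrow> Rdist (A ** B) \<le> Phi \<alpha> \<beta>)
         \<and> (\<exists>A B :: real^2^2. pos_mat A \<and> pos_mat B \<and> Rdist A \<le> \<alpha> \<and> Rdist B \<le> \<beta>
             \<and> Rdist (A ** B) = Phi \<alpha> \<beta>)"
proof
  show "\<forall>A B :: real^2^2. pos_mat A \<and> pos_mat B \<and> Rdist A \<le> \<alpha> \<and> Rdist B \<le> \<beta>
          \<longrightarrow> Rdist (A ** B) \<le> Phi \<alpha> \<beta>"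
    using Rdist_mult_le_Phi[OF assms] by blast
  obtain A B where "pos_mat A" "pos_mat B" "Rdist A = \<alpha>" "Rdist B = \<beta>"
    "Rdist (A ** B) = Phi \<alpha> \<beta>"
    using Phi_attained[OF assms] .
  then show "\<exists>A B :: real^2^2. pos_mat A \<and> pos_mat B \<and> Rdist A \<le> \<alpha> \<and> Rdist B \<le> \<beta>
               \<and> Rdist (A ** B) = Phi \<alpha> \<beta>"
    by force
qed

end
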